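(* Let $(X,\tau)$ be a nonempty regular topological space without isolated points whose underlying set $X$ is countable. There is a coloring $c:[X]^2\to2$ such that every infinite $c$-homogeneous subset of $X$ is nowhere dense in $(X,\tau)$. Consequently the ideal $nwd(X,\tau)$ of nowhere dense subsets of $(X,\tau)$ (viewed as a family of subsets of $\mathbb{N}$ via a fixed bijection $X\cong\mathbb{N}$) has a Borel selector.
   Context: A set $h$ is $c$-homogeneous if $c$ is constant on $[h]^2$. A Borel selector for a tall family $\mathcal{C}\subseteq2^{\mathbb{N}}$ is a Borel $S:2^{\mathbb{N}}\to2^{\mathbb{N}}$ with $S(x)\subseteq x$, $S(x)\in\mathcal{C}$, and $S(x)$ infinite whenever $x$ is infinite. *)

theory Defs
  imports "HOL-Analysis.Analysis"
begin

definition nowhere_dense_in :: "'a topology \<Rightarrow> 'a set \<Rightarrow> bool" where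
  "nowhere_dense_in T A \<longleftrightarrow> A \<subseteq> topspace T \<and> T interior_of (T closure_of A) = {}"

definition homogeneous :: "('a set \<Rightarrow> bool) \<Rightarrow> 'a set \<Rightarrow> bool" where
  "homogeneous c h \<longleftrightarrow> (\<exists>b. \<forall>x\<in>h. \<forall>y\<in>h. x \<noteq> y \<longrightarrow> c {x, y} = b)"

text \<open>Cantor space 2^N is nat \<Rightarrow> bool with the product topology; points are
  identified with subsets of nat via Collect. A Borel selector for a family C of subsets
  of nat.\<close>
definition borel_selector :: "nat set set \<Rightarrow> ((nat \<Rightarrow> bool) \<Rightarrow> (nat \<Rightarrow> bool)) \<Rightarrow> bool" where
  "borel_selector C S \<longleftrightarrow>
     S \<in> borel_measurable borel \<and>
     (\<forall>x. Collect (S x) \<subseteq> Collect x) \<and>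
     (\<forall>x. Collect (S x) \<in> C) \<and>
     (\<forall>x. infinite (Collect x) \<longrightarrow> infinite (Collect (S x)))"

end

theory Submission
  imports Defs
begin

text \<open>Enumerate X and, using regularity and T1, give each point x an open neighbourhood U x whose
  closure misses all points enumerated before x. Colour a pair by whether its later point lies in
  the neighbourhood of its earlier one. In a T1 space without isolated points every nonempty open
  subset of the closure of h meets h in infinitely many points; for a homogeneous h one finds, inside
  any such open set, a smaller one meeting h only in points enumerated before a fixed index.
  For the selector, run the proof of Ramsey's theorem for pairs on the pulled-back colouring,
  always choosing least elements; every step is a Boolean combination of coordinate predicates
  and finiteness conditions, hence Borel.\<close>

lemma finite_openin_eq_empty:
  assumes "t1_space T" "\<forall>x\<in>topspace T. \<not> openin T {x}" "openin T W" "finite W"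
  shows "W = {}"
proof (rule ccontr)
  assume "W \<noteq> {}"
  then obtain w where w: "w \<in> W" by blast
  have "closedin T (W - {w})"
    using assms(1,3,4) openin_subset unfolding t1_space_closedin_finite by blast
  then have "openin T (W - (W - {w}))" by (rule openin_diff[OF assms(3)])
  moreover have "W - (W - {w}) = {w}" using w by blast
  moreover have "w \<in> topspace T" using w openin_subset[OF assms(3)] by blast
  ultimately show False using assms(2) by auto
qed

lemma infinite_openin_Int_if_subset_closure_of:
  assumes "t1_space T" "\<forall>x\<in>topspace T. \<not> openin T {x}"
    and "openin T W" "W \<noteq> {}" "W \<subseteq> T closure_of h"
  shows "infinite (W \<inter> h)"
proof
  assume fin: "finite (W \<inter> h)"
  have "W \<inter> h \<subseteq> topspace T" using openin_subset[OF assms(3)] by blast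
  then have "closedin T (W \<inter> h)"
    using fin assms(1) unfolding t1_space_closedin_finite by blast
  then have "openin T (W - (W \<inter> h))" by (rule openin_diff[OF assms(3)])
  moreover have "W - (W \<inter> h) = W - h" by blast
  ultimately have W': "openin T (W - h)" by simp
  have "(W - h) \<inter> h = {}" by blast
  then have "(W - h) \<inter> T closure_of h = {}" using openin_Int_closure_of_eq_empty[OF W'] by blast
  then have "W \<subseteq> W \<inter> h" using assms(5) by blast
  then have "finite W" using fin by (rule finite_subset)
  then show False using finite_openin_eq_empty[OF assms(1-3)] assms(4) by blast
qed

lemma nowhere_dense_inI:
  assumes "t1_space T" "\<forall>x\<in>topspace T. \<not> openin T {x}" "h \<subseteq> topspace T"
    and "\<And>V. openin T V \<Longrightarrow> V \<noteq> {} \<Longrightarrow> V \<subseteq> T closure_of h \<Longrightarrow>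
           \<exists>W. openin T W \<and> W \<noteq> {} \<and> W \<subseteq> V \<and> finite (W \<inter> h)"
  shows "nowhere_dense_in T h"
proof -
  let ?V = "T interior_of (T closure_of h)"
  have V: "?V \<subseteq> T closure_of h" by (rule interior_of_subset)
  have "?V = {}"
  proof (rule ccontr)
    assume "?V \<noteq> {}"
    then obtain W where W: "openin T W" "W \<noteq> {}" "W \<subseteq> ?V" "finite (W \<inter> h)"
      using assms(4)[OF openin_interior_of _ V] by blast
    have "W \<subseteq> T closure_of h" using W(3) V by (rule subset_trans)
    then have "infinite (W \<inter> h)"
      by (rule infinite_openin_Int_if_subset_closure_of[OF assms(1,2) W(1,2)])
    then show False using W(4) by simp
  qed
  then show ?thesis using assms(3) unfolding nowhere_dense_in_def by simp
qed

lemma nowhere_dense_in_finite: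
  assumes "t1_space T" "\<forall>x\<in>topspace T. \<not> openin T {x}" "h \<subseteq> topspace T" "finite h"
  shows "nowhere_dense_in T h"
proof (rule nowhere_dense_inI[OF assms(1-3)])
  fix V assume "openin T V" "V \<noteq> {}"
  then show "\<exists>W. openin T W \<and> W \<noteq> {} \<and> W \<subseteq> V \<and> finite (W \<inter> h)"
    using assms(4) by blast
qed

definition nbhd_coloring :: "('a \<Rightarrow> nat) \<Rightarrow> ('a \<Rightarrow> 'a set) \<Rightarrow> 'a set \<Rightarrow> bool" where
  "nbhd_coloring idx U s \<longleftrightarrow> (\<exists>x y. s = {x, y} \<and> idx x < idx y \<and> y \<in> U x)"

lemma nbhd_coloring_doubleton:
  assumes "idx x < idx y"
  shows "nbhd_coloring idx U {x, y} \<longleftrightarrow> y \<in> U x"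
  using assms unfolding nbhd_coloring_def by (metis doubleton_eq_iff less_asym)

definition avoiding_nbhds :: "'a topology \<Rightarrow> ('a \<Rightarrow> nat) \<Rightarrow> ('a \<Rightarrow> 'a set) \<Rightarrow> bool" where
  "avoiding_nbhds T idx U \<longleftrightarrow> inj_on idx (topspace T) \<and>
     (\<forall>x\<in>topspace T. openin T (U x) \<and> x \<in> U x \<and>
        (\<forall>z\<in>topspace T. idx z < idx x \<longrightarrow> z \<notin> T closure_of U x))"

lemma countable_regular_space_ex_avoiding_nbhds:
  assumes "countable (topspace T)" "t1_space T" "regular_space T"
  shows "\<exists>idx U. avoiding_nbhds T idx U"
proof -
  let ?idx = "to_nat_on (topspace T)"
  have inj: "inj_on ?idx (topspace T)" using assms(1) by blast
  have "\<forall>x\<in>topspace T. \<exists>U. openin T U \<and> x \<in> U \<and> disjnt {z\<in>topspace T. ?idx z < ?idx x} (T closure_of U)"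
  proof
    fix x assume x: "x \<in> topspace T"
    let ?F = "{z\<in>topspace T. ?idx z < ?idx x}"
    have "finite ?F"
      using finite_vimage_IntI[of "{..<?idx x}", OF _ inj] by (simp add: Int_def conj_commute)
    then have "closedin T ?F" using assms(2) unfolding t1_space_closedin_finite by blast
    then show "\<exists>U. openin T U \<and> x \<in> U \<and> disjnt ?F (T closure_of U)"
      using assms(3) x unfolding regular_space by blast
  qed
  then obtain U where "\<forall>x\<in>topspace T. openin T (U x) \<and> x \<in> U x \<and>
      disjnt {z\<in>topspace T. ?idx z < ?idx x} (T closure_of U x)"
    by (auto dest: bchoice)
  then have "avoiding_nbhds T ?idx U"
    using inj unfolding avoiding_nbhds_def by (auto simp: disjnt_def)
  then show ?thesis by blast
qed

text \<open>Given p, q \<in> V \<inter> h listed in this order: if h has colour False, then U p contains no point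
  of h listed after p; if h has colour True, then U q contains every point of h listed after q,
  so the open set V - closure U q, which contains p, has the same property.\<close>
lemma nowhere_dense_in_if_homogeneous_nbhd_coloring:
  assumes t1: "t1_space T" and no_isolated: "\<forall>x\<in>topspace T. \<not> openin T {x}"
    and nbhds: "avoiding_nbhds T idx U"
    and h: "h \<subseteq> topspace T" "homogeneous (nbhd_coloring idx U) h"
  shows "nowhere_dense_in T h"
proof (rule nowhere_dense_inI[OF t1 no_isolated h(1)])
  have idx: "inj_on idx (topspace T)"
    and U: "\<And>x. x \<in> topspace T \<Longrightarrow> openin T (U x) \<and> x \<in> U x \<and>
              (\<forall>z\<in>topspace T. idx z < idx x \<longrightarrow> z \<notin> T closure_of U x)"
    using nbhds unfolding avoiding_nbhds_def by blast+
  obtain b where hb: "\<forall>x\<in>h. \<forall>y\<in>h. x \<noteq> y \<longrightarrow> nbhd_coloring idx U {x, y} = b"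
    using h(2) unfolding homogeneous_def by blast
  have b: "y \<in> U x \<longleftrightarrow> b" if "x \<in> h" "y \<in> h" "idx x < idx y" for x y
  proof -
    have "x \<noteq> y" using that(3) by blast
    then show ?thesis using hb that nbhd_coloring_doubleton[where idx=idx and U=U, OF that(3)] by simp
  qed
  have below: "finite {z\<in>h. idx z \<le> n}" for n
    using finite_vimage_IntI[of "{..n}", OF _ inj_on_subset[OF idx h(1)]]
    by (simp add: Int_def conj_commute)
  fix V assume V: "openin T V" "V \<noteq> {}" "V \<subseteq> T closure_of h"
  have inf: "infinite (V \<inter> h)"
    using infinite_openin_Int_if_subset_closure_of[OF t1 no_isolated V] .
  then obtain p where p: "p \<in> V \<inter> h" using infinite_imp_nonempty by blast
  have "infinite (V \<inter> h - {z\<in>h. idx z \<le> idx p})" using inf below by simp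
  then obtain q where "q \<in> V \<inter> h - {z\<in>h. idx z \<le> idx p}" using infinite_imp_nonempty by blast
  then have q: "q \<in> V \<inter> h" "idx p < idx q" by auto
  have pX: "p \<in> topspace T" and qX: "q \<in> topspace T" using p q h(1) by blast+
  show "\<exists>W. openin T W \<and> W \<noteq> {} \<and> W \<subseteq> V \<and> finite (W \<inter> h)"
  proof (cases b)
    case False
    have "V \<inter> U p \<inter> h \<subseteq> {z\<in>h. idx z \<le> idx p}"
      using b[of p] p False by (blast intro: leI)
    then show ?thesis
      using V(1) U[OF pX] p below by (intro exI[of _ "V \<inter> U p"]) (auto intro: finite_subset)
  next
    case True
    have "U q \<subseteq> T closure_of U q" using U[OF qX] by (simp add: closure_of_subset openin_subset)
    then have "(V - T closure_of U q) \<inter> h \<subseteq> {z\<in>h. idx z \<le> idx q}"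
      using b[of q] q True by (blast intro: leI)
    moreover have "p \<in> V - T closure_of U q" using U[OF qX] p q pX by blast
    ultimately show ?thesis
      using V(1) below by (intro exI[of _ "V - T closure_of U q"]) (auto intro: finite_subset)
  qed
qed

instance bool :: second_countable_topology
proof
  show "\<exists>B::bool set set. countable B \<and> open = generate_topology B"
    by (intro exI[of _ UNIV]) (auto simp: fun_eq_iff open_discrete intro: generate_topology.Basis)
qed

lemma measurable_pred_coordinate[measurable]: "Measurable.pred borel (\<lambda>x::nat \<Rightarrow> bool. x i)"
proof -
  have "(\<lambda>x::nat \<Rightarrow> bool. x i) \<in> borel_measurable borel" by (rule measurable_product_coordinates)
  then show ?thesis using measurable_cong_sets[OF refl sets_borel_eq_count_space] by blast
qed

text \<open>Carrying the history as a list, i.e. as a value in a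
  countable space, is what lets the measurability prover follow the recursion.\<close>
definition ramsey_candidate :: "(nat set \<Rightarrow> bool) \<Rightarrow> (nat \<Rightarrow> bool) \<Rightarrow> (nat \<times> bool) list \<Rightarrow> nat \<Rightarrow> bool" where
  "ramsey_candidate col x L n \<longleftrightarrow> x n \<and> (\<forall>(a, b)\<in>set L. a < n \<and> col {a, n} = b)"

primrec ramsey_trace :: "(nat set \<Rightarrow> bool) \<Rightarrow> (nat \<Rightarrow> bool) \<Rightarrow> nat \<Rightarrow> (nat \<times> bool) list" where
  "ramsey_trace col x 0 = []"
| "ramsey_trace col x (Suc k) =
     (let L = ramsey_trace col x k; a = LEAST n. ramsey_candidate col x L n
      in L @ [(a, infinite {n. ramsey_candidate col x L n \<and> a < n \<and> col {a, n}})])"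

definition ramsey_pivot :: "(nat set \<Rightarrow> bool) \<Rightarrow> (nat \<Rightarrow> bool) \<Rightarrow> nat \<Rightarrow> nat" where
  "ramsey_pivot col x k = fst (last (ramsey_trace col x (Suc k)))"

definition ramsey_colour :: "(nat set \<Rightarrow> bool) \<Rightarrow> (nat \<Rightarrow> bool) \<Rightarrow> nat \<Rightarrow> bool" where
  "ramsey_colour col x k = snd (last (ramsey_trace col x (Suc k)))"

text \<open>The conjunct x n only matters for finite x, where LEAST over no candidates returns 0.\<close>
definition ramsey_selector :: "(nat set \<Rightarrow> bool) \<Rightarrow> (nat \<Rightarrow> bool) \<Rightarrow> nat \<Rightarrow> bool" where
  "ramsey_selector col x n \<longleftrightarrow> x n \<and>
     (\<exists>k. ramsey_pivot col x k = n \<and> ramsey_colour col x k = (\<forall>N. \<exists>k>N. ramsey_colour col x k))"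

lemma measurable_ramsey_candidate[measurable]:
  "Measurable.pred borel (\<lambda>x. ramsey_candidate col x L n)"
  unfolding ramsey_candidate_def by measurable

lemma measurable_ramsey_trace[measurable]:
  "(\<lambda>x. ramsey_trace col x k) \<in> measurable borel (count_space UNIV)"
proof (induction k)
  case (Suc k)
  note [measurable] = Suc
  show ?case unfolding ramsey_trace.simps Let_def by measurable
qed simp

lemma ramsey_trace_Suc:
  "ramsey_trace col x (Suc k) = ramsey_trace col x k @ [(ramsey_pivot col x k, ramsey_colour col x k)]"
  unfolding ramsey_pivot_def ramsey_colour_def by (simp add: Let_def)

lemma ramsey_pivot_eq: "ramsey_pivot col x k = (LEAST n. ramsey_candidate col x (ramsey_trace col x k) n)"
  unfolding ramsey_pivot_def by (simp add: Let_def)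

lemma ramsey_colour_eq:
  "ramsey_colour col x k \<longleftrightarrow> infinite {n. ramsey_candidate col x (ramsey_trace col x k) n
     \<and> ramsey_pivot col x k < n \<and> col {ramsey_pivot col x k, n}}"
  unfolding ramsey_colour_def ramsey_pivot_def by (simp add: Let_def)

lemma ramsey_trace_eq_map:
  "ramsey_trace col x k = map (\<lambda>j. (ramsey_pivot col x j, ramsey_colour col x j)) [0..<k]"
  by (induction k) (simp_all only: ramsey_trace_Suc, auto)

lemma ramsey_candidate_trace_iff:
  "ramsey_candidate col x (ramsey_trace col x k) n \<longleftrightarrow>
     x n \<and> (\<forall>j<k. ramsey_pivot col x j < n \<and> col {ramsey_pivot col x j, n} = ramsey_colour col x j)"
  unfolding ramsey_candidate_def ramsey_trace_eq_map by auto

lemma infinite_ramsey_candidates: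
  assumes "infinite (Collect x)"
  shows "infinite {n. ramsey_candidate col x (ramsey_trace col x k) n}"
proof (induction k)
  case 0
  then show ?case using assms by (simp add: ramsey_candidate_def)
next
  case (Suc k)
  let ?A = "{n. ramsey_candidate col x (ramsey_trace col x k) n}"
  let ?a = "ramsey_pivot col x k" and ?b = "ramsey_colour col x k"
  let ?T = "{n\<in>?A. ?a < n \<and> col {?a, n}}"
  have next_eq: "{n. ramsey_candidate col x (ramsey_trace col x (Suc k)) n} =
      {n\<in>?A. ?a < n \<and> col {?a, n} = ?b}"
    unfolding ramsey_candidate_trace_iff by (auto simp: less_Suc_eq)
  show ?case
  proof (cases ?b)
    case True
    then have "infinite ?T" unfolding ramsey_colour_eq by simp
    then show ?thesis unfolding next_eq using True by simp
  next
    case False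
    then have "finite ?T" unfolding ramsey_colour_eq by simp
    then have "infinite (?A - {..?a} - ?T)" using Suc by simp
    moreover have "?A - {..?a} - ?T \<subseteq> {n\<in>?A. ?a < n \<and> col {?a, n} = ?b}" using False by auto
    ultimately show ?thesis unfolding next_eq by (rule infinite_super[rotated])
  qed
qed

lemma ramsey_pivot_candidate:
  assumes "infinite (Collect x)"
  shows "x (ramsey_pivot col x k) \<and> (\<forall>j<k. ramsey_pivot col x j < ramsey_pivot col x k \<and>
           col {ramsey_pivot col x j, ramsey_pivot col x k} = ramsey_colour col x j)"
proof -
  obtain n where "ramsey_candidate col x (ramsey_trace col x k) n"
    using infinite_imp_nonempty[OF infinite_ramsey_candidates[OF assms]] by blast
  then have "ramsey_candidate col x (ramsey_trace col x k) (ramsey_pivot col x k)"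
    unfolding ramsey_pivot_eq by (rule LeastI)
  then show ?thesis unfolding ramsey_candidate_trace_iff .
qed

lemma measurable_ramsey_selector: "ramsey_selector col \<in> borel_measurable borel"
proof (rule measurable_coordinatewise_then_product)
  fix n
  have "Measurable.pred borel (\<lambda>x. ramsey_selector col x n)"
    unfolding ramsey_selector_def ramsey_pivot_def ramsey_colour_def by measurable
  then show "(\<lambda>x. ramsey_selector col x n) \<in> borel_measurable borel"
    using measurable_cong_sets[OF refl sets_borel_eq_count_space] by blast
qed

lemma infinite_ramsey_selector:
  assumes "infinite (Collect x)"
  shows "infinite (Collect (ramsey_selector col x))"
proof -
  let ?b = "\<forall>N. \<exists>k>N. ramsey_colour col x k"
  let ?K = "{k. ramsey_colour col x k = ?b}"
  have "strict_mono (ramsey_pivot col x)"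
    using ramsey_pivot_candidate[OF assms] by (simp add: strict_mono_def)
  then have inj: "inj_on (ramsey_pivot col x) ?K"
    using strict_mono_imp_inj_on inj_on_subset by blast
  have "infinite ?K"
  proof (cases ?b)
    case True
    then show ?thesis by (simp add: infinite_nat_iff_unbounded)
  next
    case False
    then obtain N where "\<forall>k>N. \<not> ramsey_colour col x k" by auto
    then have "{N<..} \<subseteq> ?K" using False by auto
    then show ?thesis using infinite_Ioi finite_subset by blast
  qed
  moreover have "Collect (ramsey_selector col x) = ramsey_pivot col x ` ?K"
    using ramsey_pivot_candidate[OF assms] unfolding ramsey_selector_def by auto
  ultimately show ?thesis using finite_imageD[OF _ inj] by auto
qed

lemma homogeneous_ramsey_selector:
  assumes "infinite (Collect x)"
  shows "homogeneous col (Collect (ramsey_selector col x))"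
  unfolding homogeneous_def
proof (intro exI ballI impI)
  let ?b = "\<forall>N. \<exists>k>N. ramsey_colour col x k"
  fix m n assume "m \<in> Collect (ramsey_selector col x)" "n \<in> Collect (ramsey_selector col x)" "m \<noteq> n"
  then obtain j i where j: "ramsey_pivot col x j = m" "ramsey_colour col x j = ?b"
    and i: "ramsey_pivot col x i = n" "ramsey_colour col x i = ?b" and "i \<noteq> j"
    unfolding ramsey_selector_def by auto
  then consider "j < i" | "i < j" by linarith
  then show "col {m, n} = ?b"
    using ramsey_pivot_candidate[OF assms, of col i] ramsey_pivot_candidate[OF assms, of col j] i j
    by cases (auto simp: insert_commute)
qed

lemma borel_selector_ramsey_selector:
  "borel_selector {A. finite A \<or> homogeneous col A} (ramsey_selector col)"
  unfolding borel_selector_def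
proof (intro conjI allI impI measurable_ramsey_selector)
  fix x
  show "Collect (ramsey_selector col x) \<subseteq> Collect x" unfolding ramsey_selector_def by blast
  then show "Collect (ramsey_selector col x) \<in> {A. finite A \<or> homogeneous col A}"
    using homogeneous_ramsey_selector[of x col] finite_subset by blast
qed (rule infinite_ramsey_selector)

lemma borel_selector_mono: "borel_selector C S \<Longrightarrow> C \<subseteq> D \<Longrightarrow> borel_selector D S"
  unfolding borel_selector_def by blast

lemma homogeneous_image:
  assumes "homogeneous (\<lambda>s. c (f ` s)) A"
  shows "homogeneous c (f ` A)"
proof -
  obtain b where b: "\<forall>x\<in>A. \<forall>y\<in>A. x \<noteq> y \<longrightarrow> c (f ` {x, y}) = b"
    using assms unfolding homogeneous_def by blast
  have "c {f x, f y} = b" if "x \<in> A" "y \<in> A" "f x \<noteq> f y" for x y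
  proof -
    have "x \<noteq> y" using that(3) by blast
    then show ?thesis using b that(1,2) by simp
  qed
  then show ?thesis unfolding homogeneous_def by (intro exI[of _ b]) auto
qed

lemma borel_selector_pullback:
  assumes e: "bij_betw e X UNIV" and P: "\<And>A. A \<subseteq> X \<Longrightarrow> finite A \<or> homogeneous c A \<Longrightarrow> P A"
  shows "borel_selector {e ` A | A. P A} (ramsey_selector (\<lambda>s. c (inv_into X e ` s)))"
proof (rule borel_selector_mono[OF borel_selector_ramsey_selector], rule subsetI)
  let ?i = "inv_into X e"
  fix B assume "B \<in> {B. finite B \<or> homogeneous (\<lambda>s. c (?i ` s)) B}"
  then have "finite (?i ` B) \<or> homogeneous c (?i ` B)" using homogeneous_image by blast
  moreover have "?i ` B \<subseteq> X" using e by (auto simp: bij_betw_def inv_into_into)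
  moreover have "e ` ?i ` B = B" using e by (simp add: bij_betw_def image_image f_inv_into_f)
  ultimately show "B \<in> {e ` A | A. P A}" using P by blast
qed

theorem mainTheorem18:
  fixes T :: "'a topology"
  assumes "topspace T \<noteq> {}"
    and "countable (topspace T)"
    and "t1_space T" and "regular_space T"
    and "\<forall>x\<in>topspace T. \<not> openin T {x}"
  shows "(\<exists>c :: 'a set \<Rightarrow> bool. \<forall>h. h \<subseteq> topspace T \<and> infinite h \<and> homogeneous c h
            \<longrightarrow> nowhere_dense_in T h)
       \<and> (\<forall>e :: 'a \<Rightarrow> nat. bij_betw e (topspace T) UNIV \<longrightarrow>
            (\<exists>S. borel_selector {e ` A | A. nowhere_dense_in T A} S))"
proof -
  obtain idx U where nbhds: "avoiding_nbhds T idx U"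
    using countable_regular_space_ex_avoiding_nbhds[OF assms(2-4)] by blast
  let ?c = "nbhd_coloring idx U"
  have nwd: "nowhere_dense_in T h"
    if "h \<subseteq> topspace T" "finite h \<or> homogeneous ?c h" for h
    using that nowhere_dense_in_finite[OF assms(3,5)]
      nowhere_dense_in_if_homogeneous_nbhd_coloring[OF assms(3,5) nbhds] by blast
  show ?thesis
  proof (intro conjI allI impI)
    show "\<exists>c. \<forall>h. h \<subseteq> topspace T \<and> infinite h \<and> homogeneous c h \<longrightarrow> nowhere_dense_in T h"
      using nwd by blast
  next
    fix e :: "'a \<Rightarrow> nat" assume "bij_betw e (topspace T) UNIV"
    then show "\<exists>S. borel_selector {e ` A | A. nowhere_dense_in T A} S"
      using borel_selector_pullback[where P = "nowhere_dense_in T"] nwd by blast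
  qed
qed

end
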